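(* Let $G=(V,E)$ be a finite undirected graph with $V=\{1,\dots,p\}$. Then the following are equivalent: (i) for every symmetric positive semidefinite $p\times p$ real matrix $A$ with $\det A=0$, the thresholded matrix $A_G$ is positive semidefinite; (ii) $G=\bigcup_{i=1}^{\tau} G_i$ for some $\tau\in\mathbb{N}$, where $G_1,\dots,G_\tau$ are pairwise disconnected complete graphs (equivalently, every connected component of $G$ is a complete graph).
   Context: For a symmetric $p\times p$ real matrix $A=(a_{ij})$ and an undirected graph $G=(V,E)$ on $V=\{1,\dots,p\}$, the matrix $A_G$ is defined by $(A_G)_{ij}=a_{ij}$ if $i=j$ or $(i,j)\in E$, and $(A_G)_{ij}=0$ otherwise. *)

theory Defs
  imports "HOL-Analysis.Analysis"
begin

definition psd :: "real^'n^'n \<Rightarrow> bool" where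
  "psd A \<longleftrightarrow> transpose A = A \<and> (\<forall>x. 0 \<le> x \<bullet> (A *v x))"

definition threshold :: "('n \<Rightarrow> 'n \<Rightarrow> bool) \<Rightarrow> real^'n^'n \<Rightarrow> real^'n^'n" where
  "threshold E A = (\<chi> i j. if i = j \<or> E i j then A $ i $ j else 0)"

definition components_complete :: "('n \<Rightarrow> 'n \<Rightarrow> bool) \<Rightarrow> bool" where
  "components_complete E \<longleftrightarrow> (\<forall>i j. E\<^sup>*\<^sup>* i j \<longrightarrow> i \<noteq> j \<longrightarrow> E i j)"

end

theory Submission
  imports Defs
begin

text \<open>If every component is complete, the relation ``equal or adjacent'' is an equivalence,
  and thresholding keeps exactly the diagonal blocks of its classes; the quadratic form of
  the result is then the sum of the quadratic forms of A on vectors supported on one class,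
  so positive semidefiniteness survives. Otherwise some component contains an induced path
  i, j, k; the rank-one (hence singular) PSD matrix u u^T with u the indicator of
  {i, j, k} then thresholds to a matrix with quadratic form -1 at e_i - e_j + e_k.\<close>

definition block_restrict :: "('n \<Rightarrow> 'n \<Rightarrow> bool) \<Rightarrow> real^'n^'n \<Rightarrow> real^'n^'n" where
  "block_restrict R A = (\<chi> i j. if R i j then A $ i $ j else 0)"

lemma threshold_eq_block_restrict: "threshold E A = block_restrict E\<^sup>=\<^sup>= A"
  by (simp add: threshold_def block_restrict_def disj_commute)

lemma quadratic_form_eq_double_sum:
  fixes A :: "real^'n::finite^'n"
  shows "x \<bullet> (A *v x) = (\<Sum>a\<in>UNIV. x $ a * (\<Sum>b\<in>UNIV. A $ a $ b * x $ b))"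
  by (simp add: inner_vec_def matrix_vector_mult_def)

lemma quadratic_form_restrict_vec:
  fixes A :: "real^'n::finite^'n" and x :: "real^'n" and C :: "'n set"
  defines "y \<equiv> \<chi> a. if a \<in> C then x $ a else 0"
  shows "y \<bullet> (A *v y) = (\<Sum>a\<in>C. x $ a * (\<Sum>b\<in>C. A $ a $ b * x $ b))"
  by (simp add: quadratic_form_eq_double_sum y_def if_distrib[where f="\<lambda>t. t * _"]
      if_distrib[where f="\<lambda>t. _ * t"] sum.If_cases Int_absorb1 cong: if_cong)

lemma quadratic_form_block_restrict:
  fixes A :: "real^'n::finite^'n"
  assumes R: "equivp R"
  shows "x \<bullet> (block_restrict R A *v x)
    = (\<Sum>C\<in>range (\<lambda>a. Collect (R a)).
         (\<chi> a. if a \<in> C then x $ a else 0) \<bullet> (A *v (\<chi> a. if a \<in> C then x $ a else 0)))"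
proof -
  define cls where "cls = (\<lambda>a. Collect (R a))"
  have cls_eq_iff: "cls a = cls c \<longleftrightarrow> a \<in> cls c" for a c
    using R by (auto simp: cls_def equivp_def)
  then have cls_eq: "cls a = cls c" if "a \<in> cls c" for a c
    using that by blast
  have "x \<bullet> (block_restrict R A *v x) = (\<Sum>a\<in>UNIV. x $ a * (\<Sum>b\<in>cls a. A $ a $ b * x $ b))"
    by (simp add: quadratic_form_eq_double_sum block_restrict_def cls_def
        if_distrib[where f="\<lambda>t. t * _"] sum.inter_filter[symmetric] cong: if_cong)
  also have "\<dots> = (\<Sum>C\<in>range cls. \<Sum>a\<in>{a. cls a = C}. x $ a * (\<Sum>b\<in>cls a. A $ a $ b * x $ b))"
    by (subst sum.image_gen[OF finite, where g = cls]) simp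
  also have "\<dots> = (\<Sum>C\<in>range cls. \<Sum>a\<in>C. x $ a * (\<Sum>b\<in>C. A $ a $ b * x $ b))"
  proof (rule sum.cong[OF refl])
    fix C assume "C \<in> range cls"
    then obtain c where "C = cls c" by blast
    then show "(\<Sum>a\<in>{a. cls a = C}. x $ a * (\<Sum>b\<in>cls a. A $ a $ b * x $ b))
      = (\<Sum>a\<in>C. x $ a * (\<Sum>b\<in>C. A $ a $ b * x $ b))"
      by (simp add: cls_eq_iff cls_eq cong: sum.cong_simp)
  qed
  finally show ?thesis
    by (simp only: quadratic_form_restrict_vec cls_def)
qed

lemma psd_block_restrict:
  fixes A :: "real^'n::finite^'n"
  assumes R: "equivp R" and A: "psd A"
  shows "psd (block_restrict R A)"
  unfolding psd_def
proof
  have "A $ b $ a = A $ a $ b" for a b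
  proof -
    have "transpose A $ a $ b = A $ a $ b"
      using A by (simp add: psd_def)
    then show ?thesis
      by (simp add: transpose_def)
  qed
  then show "transpose (block_restrict R A) = block_restrict R A"
    using equivp_symp[OF R]
    by (auto simp: transpose_def block_restrict_def vec_eq_iff)
  show "\<forall>x. 0 \<le> x \<bullet> (block_restrict R A *v x)"
    using A by (simp add: quadratic_form_block_restrict[OF R] psd_def sum_nonneg)
qed

lemma equivp_reflclp_if_components_complete:
  assumes "symp E" "components_complete E"
  shows "equivp E\<^sup>=\<^sup>="
proof (rule equivpI)
  show "transp E\<^sup>=\<^sup>="
  proof (rule transpI)
    fix a b c assume "E\<^sup>=\<^sup>= a b" "E\<^sup>=\<^sup>= b c"
    then have "E\<^sup>*\<^sup>* a c" by auto
    then show "E\<^sup>=\<^sup>= a c"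
      using assms(2) unfolding components_complete_def by blast
  qed
qed (use assms(1) in \<open>auto simp: reflp_def symp_def\<close>)

lemma induced_path_if_not_components_complete:
  assumes "\<not> components_complete E"
  obtains i j k where "E i j" "E j k" "\<not> E i k" "i \<noteq> k"
proof -
  have "E a b \<or> (\<exists>i j k. E i j \<and> E j k \<and> \<not> E i k \<and> i \<noteq> k)"
    if "E\<^sup>*\<^sup>* a b" "a \<noteq> b" for a b
    using that
  proof (induction rule: rtranclp_induct)
    case (step c b)
    then show ?case
      by (cases "a = c") auto
  qed simp
  with assms that show thesis
    unfolding components_complete_def by blast
qed

lemma psd_rank_one: "psd (\<chi> a b. u $ a * u $ b :: real^'n::finite^'n)"
proof -
  have rank_one: "(\<chi> a b. u $ a * u $ b) *v x = (u \<bullet> x) *\<^sub>R u" for x :: "real^'n"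
    by (simp add: vec_eq_iff matrix_vector_mult_def inner_vec_def sum_distrib_left
        mult.commute mult.left_commute)
  show ?thesis
    unfolding psd_def rank_one
    by (simp add: transpose_def vec_eq_iff mult.commute inner_commute)
qed

lemma det_rank_one_eq_0:
  fixes u y :: "real^'n::finite"
  assumes "u \<bullet> y = 0" "y \<noteq> 0"
  shows "det (\<chi> a b. u $ a * u $ b) = 0"
proof -
  have "(\<chi> a b. u $ a * u $ b) *v y = (\<chi> a b. u $ a * u $ b) *v 0"
    using assms(1)
    by (simp add: vec_eq_iff matrix_vector_mult_def inner_vec_def sum_distrib_left[symmetric]
        mult.assoc)
  with assms(2) show ?thesis
    by (metis det_eq_0_rank less_rank_noninjective injD)
qed

lemma not_psd_threshold_rank_one_on_induced_path:
  fixes E :: "'n::finite \<Rightarrow> 'n \<Rightarrow> bool"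
  assumes "symp E" "E i j" "E j k" "\<not> E i k" "i \<noteq> k"
  defines "u \<equiv> \<chi> a. if a \<in> {i, j, k} then 1 else 0"
  shows "\<not> psd (threshold E (\<chi> a b. u $ a * u $ b))"
proof
  have ij: "i \<noteq> j" and jk: "j \<noteq> k"
    using assms(2-4) by auto
  have E_sym: "E j i" "E k j" "\<not> E k i"
    using assms(1-4) by (auto dest: sympD)
  let ?T = "threshold E (\<chi> a b. u $ a * u $ b)"
  define x :: "real^'n" where
    "x = (\<chi> a. if a = i then 1 else if a = j then -1 else if a = k then 1 else 0)"
  have inner: "(\<Sum>b\<in>UNIV. ?T $ a $ b * x $ b) = (\<Sum>b\<in>{i, j, k}. ?T $ a $ b * x $ b)" for a
    by (rule sum.mono_neutral_right) (auto simp: x_def)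
  have "x \<bullet> (?T *v x) = (\<Sum>a\<in>{i, j, k}. x $ a * (\<Sum>b\<in>{i, j, k}. ?T $ a $ b * x $ b))"
    unfolding quadratic_form_eq_double_sum inner
    by (rule sum.mono_neutral_right) (auto simp: x_def)
  also have "\<dots> = -1"
    using assms(2-5) ij jk E_sym by (simp add: x_def threshold_def u_def)
  finally have "x \<bullet> (?T *v x) = -1" .
  moreover assume "psd ?T"
  ultimately show False
    unfolding psd_def by (metis neg_0_le_iff_le not_one_le_zero)
qed

lemma singular_psd_with_non_psd_threshold:
  fixes E :: "'n::finite \<Rightarrow> 'n \<Rightarrow> bool"
  assumes "symp E" "E i j" "E j k" "\<not> E i k" "i \<noteq> k"
  obtains A :: "real^'n^'n" where "psd A" "det A = 0" "\<not> psd (threshold E A)"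
proof
  define u :: "real^'n" where "u = (\<chi> a. if a \<in> {i, j, k} then 1 else 0)"
  define y :: "real^'n" where "y = axis i 1 - axis j 1"
  have "i \<noteq> j"
    using assms(3,4) by auto
  have "u \<bullet> y = 0"
    by (simp add: y_def u_def inner_diff_right inner_axis)
  moreover have "y $ i = 1"
    using \<open>i \<noteq> j\<close> by (simp add: y_def axis_def)
  then have "y \<noteq> 0"
    by auto
  ultimately show "det (\<chi> a b. u $ a * u $ b) = 0"
    by (rule det_rank_one_eq_0)
  show "psd (\<chi> a b. u $ a * u $ b)"
    by (rule psd_rank_one)
  show "\<not> psd (threshold E (\<chi> a b. u $ a * u $ b))"
    unfolding u_def using assms by (rule not_psd_threshold_rank_one_on_induced_path)
qed

theorem corollary3:
  fixes E :: "'n::finite \<Rightarrow> 'n \<Rightarrow> bool"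
  assumes "symp E"
  shows "(\<forall>A::real^'n^'n. psd A \<and> det A = 0 \<longrightarrow> psd (threshold E A))
         \<longleftrightarrow> components_complete E"
proof
  assume threshold_psd: "\<forall>A::real^'n^'n. psd A \<and> det A = 0 \<longrightarrow> psd (threshold E A)"
  show "components_complete E"
  proof (rule ccontr)
    assume "\<not> components_complete E"
    then obtain i j k where "E i j" "E j k" "\<not> E i k" "i \<noteq> k"
      by (rule induced_path_if_not_components_complete)
    then obtain A :: "real^'n^'n" where "psd A" "det A = 0" "\<not> psd (threshold E A)"
      by (rule singular_psd_with_non_psd_threshold[OF assms])
    with threshold_psd show False
      by blast
  qed
next
  assume "components_complete E"
  then have "equivp E\<^sup>=\<^sup>="
    using assms by (rule equivp_reflclp_if_components_complete[rotated])
  then show "\<forall>A::real^'n^'n. psd A \<and> det A = 0 \<longrightarrow> psd (threshold E A)"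
    by (simp add: threshold_eq_block_restrict psd_block_restrict)
qed

end
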